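(* Let $p,q\le 5$ and let $f$ (with $p$ arguments) and $g$ (with $q$ arguments) be real functions whose values depend only on the relative order of their argument lists, with $|f|\le 5$ and $|g|\le 5$. If $\pi$ is a uniformly distributed permutation of $\{1^{n_1},\dots,h^{n_h}\}$ with $n=\sum_a n_a\ge p+q$, then \[\Bigl|\mathrm{Cov}\bigl(f(\pi(1),\dots,\pi(p)),\,g(\pi(p+1),\dots,\pi(p+q))\bigr)\Bigr|\le C/n\] for an absolute constant $C$ (independent of $h$, $n$, the $n_a$, $f$, $g$).
   Context: A permutation of the multiset $\{1^{n_1},\dots,h^{n_h}\}$ ($n_a$ positive integers) is a sequence $(\pi(1),\dots,\pi(n))$ in which each $a$ occurs exactly $n_a$ times; uniformly distributed means all such sequences are equally likely. The relative order of a sequence $s_1,\dots,s_p$ is the ordered partition of $\{1,\dots,p\}$ obtained by putting $q$ and $r$ in the same block iff $s_q=s_r$, with blocks ordered by increasing common value of $s_q$. *)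

theory Defs
  imports "HOL-Probability.Probability" "HOL-Combinatorics.Multiset_Permutations"
begin

text \<open>Relative order of a sequence s_1..s_p (0-indexed here): the ordered partition
  of the positions, blocks = positions with equal value, ordered by increasing value.\<close>
definition rel_order :: "'a::linorder list \<Rightarrow> nat set list" where
  "rel_order s = map (\<lambda>v. {i. i < length s \<and> s ! i = v}) (sorted_list_of_set (set s))"

definition depends_only_on_rel_order :: "nat \<Rightarrow> (nat list \<Rightarrow> real) \<Rightarrow> bool" where
  "depends_only_on_rel_order p f \<longleftrightarrow>
     (\<forall>xs ys. length xs = p \<and> length ys = p \<and> rel_order xs = rel_order ys \<longrightarrow> f xs = f ys)"

definition multiset_of_counts :: "nat \<Rightarrow> (nat \<Rightarrow> nat) \<Rightarrow> nat multiset" where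
  "multiset_of_counts h ns = (\<Sum>a\<in>{1..h}. replicate_mset (ns a) a)"

definition pmf_cov :: "'a pmf \<Rightarrow> ('a \<Rightarrow> real) \<Rightarrow> ('a \<Rightarrow> real) \<Rightarrow> real" where
  "pmf_cov P X Y =
     measure_pmf.expectation P (\<lambda>w. (X w - measure_pmf.expectation P X) *
                                     (Y w - measure_pmf.expectation P Y))"

end

theory Submission
  imports Defs
begin

text \<open>
  The proof only uses exchangeability of the uniformly random rearrangement \<pi>. Centre the first
  block, X = f(\<pi>(1..p)) - E X. Without changing E[X g(\<pi>(p+1..p+q))], the second block may be
  read off at any q distinct positions outside the first p, so g(\<pi>(p+1..p+q)) may be replaced by
  its average Y(\<pi>) over all such position tuples. Averaging over all q-tuples of distinct
  positions instead gives a constant c, because that average only depends on the multiset of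
  entries of \<pi>. Both are means of a function bounded by sup|g| over nested sets of tuples whose
  sizes differ by a proportion of at most q(p+q)/n, so
  |Cov| = |E[X (Y(\<pi>) - c)]| \<le> 2 sup|f| \<cdot> 2 sup|g| \<cdot> q(p+q)/n.
\<close>

definition set_mean :: "'a set \<Rightarrow> ('a \<Rightarrow> real) \<Rightarrow> real" where
  "set_mean A f = sum f A / card A"

lemma set_mean_const_mult: "set_mean A (\<lambda>x. c * f x) = c * set_mean A f"
  by (simp add: set_mean_def sum_distrib_left)

lemma abs_sum_le_card_mult:
  fixes f :: "'a \<Rightarrow> real"
  assumes "\<And>x. x \<in> A \<Longrightarrow> \<bar>f x\<bar> \<le> c"
  shows "\<bar>sum f A\<bar> \<le> real (card A) * c"
  using order_trans[OF sum_abs sum_bounded_above] assms by blast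

lemma abs_set_mean_le:
  assumes "A \<noteq> {}" and bound: "\<And>x. x \<in> A \<Longrightarrow> \<bar>f x\<bar> \<le> c"
  shows "\<bar>set_mean A f\<bar> \<le> c"
proof (cases "finite A")
  case True
  then have "card A > 0" using assms(1) by (simp add: card_gt_0_iff)
  then show ?thesis
    using abs_sum_le_card_mult[OF bound] by (simp add: set_mean_def field_simps)
next
  case False
  then show ?thesis using assms by (auto simp: set_mean_def intro: order_trans[OF abs_ge_zero])
qed

lemma abs_set_mean_diff_subset_le:
  assumes "finite A" "B \<subseteq> A" "B \<noteq> {}" and bound: "\<And>x. x \<in> A \<Longrightarrow> \<bar>f x\<bar> \<le> c"
  shows "\<bar>set_mean A f - set_mean B f\<bar> \<le> 2 * c * (1 - card B / card A)"
proof -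
  let ?a = "real (card A)" and ?b = "real (card B)"
  have "finite B" using assms(1,2) by (rule finite_subset[rotated])
  then have b: "0 < ?b" using assms(3) by (simp add: card_gt_0_iff)
  have ab: "?b \<le> ?a" using assms(1,2) by (simp add: card_mono)
  have split: "sum f A = sum f B + sum f (A - B)"
    using sum.subset_diff[OF assms(2,1), of f] by linarith
  have sum_B: "\<bar>sum f B\<bar> \<le> ?b * c" using bound assms(2) by (intro abs_sum_le_card_mult) auto
  have "\<bar>sum f (A - B)\<bar> \<le> card (A - B) * c" using bound by (intro abs_sum_le_card_mult) auto
  then have sum_rest: "\<bar>sum f (A - B)\<bar> \<le> (?a - ?b) * c"
    using assms(1,2) by (simp add: card_Diff_subset finite_subset of_nat_diff card_mono)
  have "set_mean A f - set_mean B f = (sum f (A - B) - sum f B * (?a - ?b) / ?b) / ?a"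
    using b ab by (simp add: set_mean_def split field_simps)
  also have "\<bar>\<dots>\<bar> \<le> ((?a - ?b) * c + ?b * c * (?a - ?b) / ?b) / ?a"
  proof -
    have "\<bar>sum f B * (?a - ?b) / ?b\<bar> = \<bar>sum f B\<bar> * (?a - ?b) / ?b"
      using ab b by (simp add: abs_mult)
    also have "\<dots> \<le> ?b * c * (?a - ?b) / ?b"
      using sum_B ab b by (intro divide_right_mono mult_right_mono) auto
    finally have "\<bar>sum f B * (?a - ?b) / ?b\<bar> \<le> ?b * c * (?a - ?b) / ?b" .
    then have "\<bar>sum f (A - B) - sum f B * (?a - ?b) / ?b\<bar> \<le> (?a - ?b) * c + ?b * c * (?a - ?b) / ?b"
      using abs_triangle_ineq4[of "sum f (A - B)" "sum f B * (?a - ?b) / ?b"] sum_rest by linarith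
    then show ?thesis by (simp add: abs_divide divide_right_mono)
  qed
  also have "\<dots> = 2 * c * (1 - ?b / ?a)" using b ab by (simp add: field_simps)
  finally show ?thesis .
qed

lemma set_mean_centered_mult_shift:
  assumes "finite A"
  shows "set_mean A (\<lambda>x. (f x - set_mean A f) * (g x - c))
       = set_mean A (\<lambda>x. (f x - set_mean A f) * g x)"
proof -
  have centered: "(\<Sum>x\<in>A. f x - set_mean A f) = 0"
    using assms by (cases "A = {}") (simp_all add: sum_subtractf set_mean_def)
  have "(\<Sum>x\<in>A. (f x - set_mean A f) * (g x - c))
      = (\<Sum>x\<in>A. (f x - set_mean A f) * g x - c * (f x - set_mean A f))"
    by (rule sum.cong) (simp_all add: algebra_simps)
  also have "\<dots> = (\<Sum>x\<in>A. (f x - set_mean A f) * g x) - c * (\<Sum>x\<in>A. f x - set_mean A f)"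
    by (simp add: sum_subtractf sum_distrib_left right_diff_distrib)
  finally have "(\<Sum>x\<in>A. (f x - set_mean A f) * (g x - c)) = (\<Sum>x\<in>A. (f x - set_mean A f) * g x)"
    by (simp add: centered)
  then show ?thesis by (simp add: set_mean_def)
qed

lemma pmf_cov_pmf_of_set:
  assumes "finite S" "S \<noteq> {}"
  shows "pmf_cov (pmf_of_set S) X Y
       = set_mean S (\<lambda>w. (X w - set_mean S X) * (Y w - set_mean S Y))"
  using assms by (simp add: pmf_cov_def integral_pmf_of_set set_mean_def)

definition distinct_tuples :: "nat \<Rightarrow> 'a set \<Rightarrow> 'a list set" where
  "distinct_tuples k A = {xs. length xs = k \<and> distinct xs \<and> set xs \<subseteq> A}"

lemma finite_distinct_tuples: "finite A \<Longrightarrow> finite (distinct_tuples k A)"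
  unfolding distinct_tuples_def
  by (rule finite_subset[OF _ finite_lists_length_eq[of A k]]) auto

lemma card_distinct_tuples:
  "finite A \<Longrightarrow> k \<le> card A \<Longrightarrow> card (distinct_tuples k A) = \<Prod>{card A - k + 1 .. card A}"
  unfolding distinct_tuples_def by (rule card_lists_distinct_length_eq)

lemma distinct_tuples_mono: "A \<subseteq> B \<Longrightarrow> distinct_tuples k A \<subseteq> distinct_tuples k B"
  unfolding distinct_tuples_def by auto

lemma upt_in_distinct_tuples: "p + q \<le> n \<Longrightarrow> [p..<p + q] \<in> distinct_tuples q {p..<n}"
  unfolding distinct_tuples_def by auto

lemma bij_betw_map_distinct_tuples:
  assumes "\<sigma> permutes A"
  shows "bij_betw (map \<sigma>) (distinct_tuples k A) (distinct_tuples k A)"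
proof (rule bij_betw_byWitness[where f' = "map (inv \<sigma>)"])
  have closed: "map \<tau> ` distinct_tuples k A \<subseteq> distinct_tuples k A" if "\<tau> permutes A" for \<tau>
    using permutes_inj[OF that] permutes_in_image[OF that]
    by (auto simp: distinct_tuples_def distinct_map inj_on_subset subset_iff)
  show "map \<sigma> ` distinct_tuples k A \<subseteq> distinct_tuples k A"
    using assms by (rule closed)
  show "map (inv \<sigma>) ` distinct_tuples k A \<subseteq> distinct_tuples k A"
    using permutes_inv[OF assms] by (rule closed)
qed (simp_all add: permutes_inv_o[OF assms])

lemma card_distinct_tuples_avoiding_prefix:
  assumes "p + q \<le> n"
  shows "1 - real (card (distinct_tuples q {p..<n})) / card (distinct_tuples q {..<n})
           \<le> real (q * (p + q)) / n"
proof (cases "q = 0")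
  case True
  have "distinct_tuples 0 A = {[]}" for A :: "nat set"
    by (auto simp: distinct_tuples_def)
  with True show ?thesis by simp
next
  case False
  with assms have n: "0 < n" by simp
  have lower: "(n - p - q) ^ q \<le> card (distinct_tuples q {p..<n})"
  proof -
    have "(n - p - q) ^ q = (\<Prod>i\<in>{n - p - q + 1 .. n - p}. n - p - q)"
      using assms by simp
    also have "\<dots> \<le> \<Prod>{n - p - q + 1 .. n - p}"
      by (rule prod_mono) auto
    finally show ?thesis using assms by (simp add: card_distinct_tuples)
  qed
  have upper: "card (distinct_tuples q {..<n}) \<le> n ^ q"
  proof -
    have "\<Prod>{n - q + 1 .. n} \<le> n ^ q"
      using n by (intro prod_le_power) auto
    then show ?thesis using assms by (simp add: card_distinct_tuples)
  qed
  have positive: "0 < card (distinct_tuples q {..<n})"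
    using assms by (simp add: card_distinct_tuples)
  define x where "x = - real (p + q) / n"
  have "-1 \<le> x" unfolding x_def using n assms by (simp add: field_simps)
  then have "1 + real q * x \<le> (1 + x) ^ q" by (rule Bernoulli_inequality)
  also have "(1 + x) ^ q = real ((n - p - q) ^ q) / real (n ^ q)"
    unfolding x_def using n assms by (simp add: field_simps of_nat_diff power_divide)
  also have "\<dots> \<le> real (card (distinct_tuples q {p..<n})) / real (n ^ q)"
    using lower by (intro divide_right_mono) auto
  also have "\<dots> \<le> real (card (distinct_tuples q {p..<n})) / card (distinct_tuples q {..<n})"
    using upper positive n by (intro divide_left_mono) auto
  finally show ?thesis unfolding x_def using n by (simp add: field_simps)
qed

lemma exists_permutes_map_eq:
  assumes "distinct xs" "distinct ys" "length xs = length ys" "set xs \<subseteq> S" "set ys \<subseteq> S"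
  shows "\<exists>\<sigma>. \<sigma> permutes S \<and> map \<sigma> xs = ys"
  using assms
proof (induction xs arbitrary: ys)
  case Nil
  then show ?case by (auto intro: permutes_id)
next
  case (Cons x xs)
  then obtain y ys' where ys: "ys = y # ys'" by (cases ys) auto
  with Cons obtain \<sigma> where \<sigma>: "\<sigma> permutes S" "map \<sigma> xs = ys'" by auto
  define \<tau> where "\<tau> = Transposition.transpose y (\<sigma> x) \<circ> \<sigma>"
  have "\<sigma> x \<in> S" using Cons.prems \<sigma>(1) by (simp add: permutes_in_image)
  have "y \<in> S" using Cons.prems ys by auto
  have "\<sigma> x \<notin> set ys'"
    using Cons.prems(1) \<sigma> permutes_inj[OF \<sigma>(1)] by (auto simp: inj_eq)
  moreover have "y \<notin> set ys'" using Cons.prems(2) ys by auto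
  ultimately have "\<tau> z = \<sigma> z" if "z \<in> set xs" for z
  proof -
    have "\<sigma> z \<in> set ys'" using that \<sigma>(2) by auto
    with \<open>\<sigma> x \<notin> set ys'\<close> \<open>y \<notin> set ys'\<close> show ?thesis
      by (auto simp: \<tau>_def Transposition.transpose_def)
  qed
  then have "map \<tau> xs = ys'"
    unfolding \<sigma>(2)[symmetric] by (rule map_cong[OF refl])
  moreover have "\<tau> x = y" by (simp add: \<tau>_def)
  moreover have "\<tau> permutes S"
    unfolding \<tau>_def using \<sigma>(1) permutes_swap_id[OF \<open>y \<in> S\<close> \<open>\<sigma> x \<in> S\<close>] by (rule permutes_compose)
  ultimately show ?case using ys by (intro exI[of _ \<tau>]) simp
qed

lemma sum_permutations_of_multiset_permute_list:
  assumes \<sigma>: "\<sigma> permutes {..<size M}"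
  shows "(\<Sum>\<pi>\<in>permutations_of_multiset M. H (permute_list \<sigma> \<pi>))
       = (\<Sum>\<pi>\<in>permutations_of_multiset M. H \<pi>)"
proof (rule sum.reindex_bij_witness[where i = "permute_list (inv \<sigma>)" and j = "permute_list \<sigma>"])
  have \<sigma>': "inv \<sigma> permutes {..<size M}" using \<sigma> by (rule permutes_inv)
  fix \<pi> assume \<pi>: "\<pi> \<in> permutations_of_multiset M"
  then have length: "length \<pi> = size M" by (rule length_finite_permutations_of_multiset)
  show "permute_list (inv \<sigma>) (permute_list \<sigma> \<pi>) = \<pi>"
    using permute_list_compose[of "inv \<sigma>" \<pi> \<sigma>] \<sigma>' length
    by (simp add: permutes_inv_o(1)[OF \<sigma>])
  show "permute_list \<sigma> (permute_list (inv \<sigma>) \<pi>) = \<pi>"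
    using permute_list_compose[of \<sigma> \<pi> "inv \<sigma>"] \<sigma> length
    by (simp add: permutes_inv_o(2)[OF \<sigma>])
  show "permute_list \<sigma> \<pi> \<in> permutations_of_multiset M"
    using \<pi> length \<sigma> by (auto simp: permutations_of_multiset_def)
  show "permute_list (inv \<sigma>) \<pi> \<in> permutations_of_multiset M"
    using \<pi> length \<sigma>' by (auto simp: permutations_of_multiset_def)
qed simp

lemma take_permute_list_eq:
  assumes "\<sigma> permutes {p..<length xs}"
  shows "take p (permute_list \<sigma> xs) = take p xs"
proof (rule nth_equalityI)
  have \<sigma>: "\<sigma> permutes {..<length xs}" using assms by (rule permutes_subset) auto
  fix i assume "i < length (take p (permute_list \<sigma> xs))"
  moreover from this have "\<sigma> i = i" using assms by (intro permutes_not_in) auto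
  ultimately show "take p (permute_list \<sigma> xs) ! i = take p xs ! i"
    using \<sigma> by (simp add: permute_list_nth)
qed simp

lemma sum_permutations_of_multiset_tuple_eq:
  assumes "is \<in> distinct_tuples q {p..<size M}" "js \<in> distinct_tuples q {p..<size M}"
  shows "(\<Sum>\<pi>\<in>permutations_of_multiset M. \<Phi> (take p \<pi>) (map ((!) \<pi>) is))
       = (\<Sum>\<pi>\<in>permutations_of_multiset M. \<Phi> (take p \<pi>) (map ((!) \<pi>) js))"
proof -
  obtain \<sigma> where \<sigma>: "\<sigma> permutes {p..<size M}" "map \<sigma> js = is"
    using exists_permutes_map_eq[of js "is" "{p..<size M}"] assms
    by (auto simp: distinct_tuples_def)
  have \<sigma>': "\<sigma> permutes {..<size M}" using \<sigma>(1) by (rule permutes_subset) auto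
  have "\<Phi> (take p (permute_list \<sigma> \<pi>)) (map ((!) (permute_list \<sigma> \<pi>)) js)
      = \<Phi> (take p \<pi>) (map ((!) \<pi>) is)" if "\<pi> \<in> permutations_of_multiset M" for \<pi>
  proof -
    have length: "length \<pi> = size M" using that by (rule length_finite_permutations_of_multiset)
    have "map ((!) (permute_list \<sigma> \<pi>)) js = map ((!) \<pi>) (map \<sigma> js)"
      using assms(2) \<sigma>' length by (auto simp: distinct_tuples_def permute_list_nth)
    then show ?thesis using \<sigma>(1) length by (simp add: take_permute_list_eq \<sigma>(2))
  qed
  then have "(\<Sum>\<pi>\<in>permutations_of_multiset M. \<Phi> (take p \<pi>) (map ((!) \<pi>) is))
      = (\<Sum>\<pi>\<in>permutations_of_multiset M.
           \<Phi> (take p (permute_list \<sigma> \<pi>)) (map ((!) (permute_list \<sigma> \<pi>)) js))"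
    by (simp cong: sum.cong)
  also have "\<dots> = (\<Sum>\<pi>\<in>permutations_of_multiset M. \<Phi> (take p \<pi>) (map ((!) \<pi>) js))"
    using \<sigma>' by (rule sum_permutations_of_multiset_permute_list)
  finally show ?thesis .
qed

lemma sum_permutations_of_multiset_tuple_mean:
  assumes "js \<in> distinct_tuples q {p..<size M}"
  shows "(\<Sum>\<pi>\<in>permutations_of_multiset M. \<Phi> (take p \<pi>) (map ((!) \<pi>) js))
       = (\<Sum>\<pi>\<in>permutations_of_multiset M.
            set_mean (distinct_tuples q {p..<size M}) (\<lambda>is. \<Phi> (take p \<pi>) (map ((!) \<pi>) is)))"
proof -
  let ?W = "permutations_of_multiset M" and ?D = "distinct_tuples q {p..<size M}"
  let ?S = "\<lambda>is. \<Sum>\<pi>\<in>?W. \<Phi> (take p \<pi>) (map ((!) \<pi>) is)"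
  have "card ?D > 0"
    using assms finite_distinct_tuples[of "{p..<size M}" q] by (auto simp: card_gt_0_iff)
  have same: "(\<Sum>is\<in>?D. ?S is) = (\<Sum>is\<in>?D. ?S js)"
    by (rule sum.cong[OF refl]) (rule sum_permutations_of_multiset_tuple_eq[OF _ assms])
  have "(\<Sum>\<pi>\<in>?W. set_mean ?D (\<lambda>is. \<Phi> (take p \<pi>) (map ((!) \<pi>) is))) = (\<Sum>is\<in>?D. ?S is) / card ?D"
    by (simp add: set_mean_def sum_divide_distrib sum.swap[of _ ?W])
  also have "\<dots> = ?S js" using same \<open>card ?D > 0\<close> by simp
  finally show ?thesis by simp
qed

lemma sum_distinct_tuples_nth_mset_eq:
  assumes "mset xs = mset ys"
  shows "(\<Sum>is\<in>distinct_tuples k {..<length xs}. G (map ((!) xs) is))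
       = (\<Sum>is\<in>distinct_tuples k {..<length ys}. G (map ((!) ys) is))"
proof -
  obtain \<tau> where \<tau>: "\<tau> permutes {..<length ys}" "permute_list \<tau> ys = xs"
    using assms by (rule mset_eq_permutation)
  have length: "length xs = length ys" using assms by (rule mset_eq_length)
  have "G (map ((!) xs) is) = G (map ((!) ys) (map \<tau> is))"
    if "is \<in> distinct_tuples k {..<length ys}" for "is"
    using that \<tau>
    by (auto simp: distinct_tuples_def permute_list_nth subset_iff intro!: arg_cong[where f = G])
  then have "(\<Sum>is\<in>distinct_tuples k {..<length xs}. G (map ((!) xs) is))
      = (\<Sum>is\<in>distinct_tuples k {..<length ys}. G (map ((!) ys) (map \<tau> is)))"
    unfolding length by (rule sum.cong[OF refl])
  also have "\<dots> = (\<Sum>is\<in>distinct_tuples k {..<length ys}. G (map ((!) ys) is))"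
    using bij_betw_map_distinct_tuples[OF \<tau>(1)] by (rule sum.reindex_bij_betw)
  finally show ?thesis .
qed

lemma pmf_cov_consecutive_blocks_eq:
  fixes F G :: "'a list \<Rightarrow> real"
  assumes pq: "p + q \<le> size M"
  defines "W \<equiv> permutations_of_multiset M"
  shows "pmf_cov (pmf_of_set W) (\<lambda>\<pi>. F (take p \<pi>)) (\<lambda>\<pi>. G (take q (drop p \<pi>)))
       = set_mean W (\<lambda>\<pi>. (F (take p \<pi>) - set_mean W (\<lambda>\<pi>. F (take p \<pi>)))
           * (set_mean (distinct_tuples q {p..<size M}) (\<lambda>is. G (map ((!) \<pi>) is)) - c))"
proof -
  let ?X = "\<lambda>\<pi>. F (take p \<pi>)" and ?Y = "\<lambda>\<pi>. G (take q (drop p \<pi>))"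
  let ?D = "distinct_tuples q {p..<size M}"
  define mX where "mX = set_mean W ?X"
  define Ybar where "Ybar \<pi> = set_mean ?D (\<lambda>is. G (map ((!) \<pi>) is))" for \<pi>
  have "pmf_cov (pmf_of_set W) ?X ?Y = set_mean W (\<lambda>\<pi>. (?X \<pi> - mX) * (?Y \<pi> - set_mean W ?Y))"
    unfolding mX_def W_def by (simp add: pmf_cov_pmf_of_set)
  also have "\<dots> = set_mean W (\<lambda>\<pi>. (?X \<pi> - mX) * ?Y \<pi>)"
    unfolding mX_def W_def by (simp add: set_mean_centered_mult_shift)
  also have "\<dots> = set_mean W (\<lambda>\<pi>. (?X \<pi> - mX) * Ybar \<pi>)"
  proof -
    have "?Y \<pi> = G (map ((!) \<pi>) [p..<p + q])" if "\<pi> \<in> W" for \<pi>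
      using length_finite_permutations_of_multiset[of \<pi> M] that pq unfolding W_def
      by (intro arg_cong[where f = G] nth_equalityI) auto
    then have "(\<Sum>\<pi>\<in>W. (?X \<pi> - mX) * ?Y \<pi>)
        = (\<Sum>\<pi>\<in>W. (?X \<pi> - mX) * G (map ((!) \<pi>) [p..<p + q]))"
      by (simp cong: sum.cong)
    also have "\<dots> = (\<Sum>\<pi>\<in>W. set_mean ?D (\<lambda>is. (?X \<pi> - mX) * G (map ((!) \<pi>) is)))"
      unfolding W_def using upt_in_distinct_tuples[OF pq]
      by (rule sum_permutations_of_multiset_tuple_mean[where \<Phi> = "\<lambda>u v. (F u - mX) * G v"])
    also have "\<dots> = (\<Sum>\<pi>\<in>W. (?X \<pi> - mX) * Ybar \<pi>)"
      by (simp only: set_mean_const_mult Ybar_def)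
    finally show ?thesis by (simp add: set_mean_def)
  qed
  also have "\<dots> = set_mean W (\<lambda>\<pi>. (?X \<pi> - mX) * (Ybar \<pi> - c))"
    unfolding mX_def W_def by (simp add: set_mean_centered_mult_shift)
  finally show ?thesis unfolding mX_def Ybar_def .
qed

lemma abs_set_mean_distinct_tuples_diff_le:
  fixes G :: "'a list \<Rightarrow> real"
  assumes "\<pi> \<in> permutations_of_multiset M" "\<pi>' \<in> permutations_of_multiset M"
    and pq: "p + q \<le> size M" and G: "\<And>ys. length ys = q \<Longrightarrow> \<bar>G ys\<bar> \<le> b"
  shows "\<bar>set_mean (distinct_tuples q {p..<size M}) (\<lambda>is. G (map ((!) \<pi>) is))
          - set_mean (distinct_tuples q {..<size M}) (\<lambda>is. G (map ((!) \<pi>') is))\<bar>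
         \<le> 2 * b * (q * (p + q) / size M)"
proof -
  let ?D = "distinct_tuples q {p..<size M}" and ?E = "distinct_tuples q {..<size M}"
  have D_nonempty: "?D \<noteq> {}" using upt_in_distinct_tuples[OF pq] by blast
  have length: "length \<pi> = size M" "length \<pi>' = size M"
    using assms(1,2) by (simp_all add: length_finite_permutations_of_multiset)
  have "mset \<pi> = mset \<pi>'"
    using assms(1,2) by (simp add: permutations_of_multisetD)
  then have "(\<Sum>is\<in>distinct_tuples q {..<length \<pi>}. G (map ((!) \<pi>) is))
      = (\<Sum>is\<in>distinct_tuples q {..<length \<pi>'}. G (map ((!) \<pi>') is))"
    by (rule sum_distinct_tuples_nth_mset_eq)
  then have "set_mean ?E (\<lambda>is. G (map ((!) \<pi>') is)) = set_mean ?E (\<lambda>is. G (map ((!) \<pi>) is))"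
    by (simp add: set_mean_def length)
  moreover have "\<bar>set_mean ?E (\<lambda>is. G (map ((!) \<pi>) is)) - set_mean ?D (\<lambda>is. G (map ((!) \<pi>) is))\<bar>
      \<le> 2 * b * (1 - real (card ?D) / card ?E)"
    using D_nonempty G
    by (intro abs_set_mean_diff_subset_le finite_distinct_tuples distinct_tuples_mono)
      (auto simp: distinct_tuples_def)
  moreover have "2 * b * (1 - real (card ?D) / card ?E) \<le> 2 * b * (q * (p + q) / size M)"
    using card_distinct_tuples_avoiding_prefix[OF pq] G[of "replicate q undefined"]
    by (intro mult_left_mono) auto
  ultimately show ?thesis by (simp add: abs_minus_commute)
qed

lemma abs_pmf_cov_consecutive_blocks_le:
  fixes F G :: "'a list \<Rightarrow> real"
  assumes pq: "p + q \<le> size M"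
    and F: "\<And>xs. length xs = p \<Longrightarrow> \<bar>F xs\<bar> \<le> a"
    and G: "\<And>ys. length ys = q \<Longrightarrow> \<bar>G ys\<bar> \<le> b"
  shows "\<bar>pmf_cov (pmf_of_set (permutations_of_multiset M))
            (\<lambda>\<pi>. F (take p \<pi>)) (\<lambda>\<pi>. G (take q (drop p \<pi>)))\<bar>
         \<le> 4 * a * b * (q * (p + q) / size M)"
proof -
  let ?W = "permutations_of_multiset M" and ?X = "\<lambda>\<pi>. F (take p \<pi>)"
  let ?r = "real (q * (p + q)) / size M"
  obtain \<pi>\<^sub>0 where "\<pi>\<^sub>0 \<in> ?W" using permutations_of_multiset_not_empty by blast
  let ?c = "set_mean (distinct_tuples q {..<size M}) (\<lambda>is. G (map ((!) \<pi>\<^sub>0) is))"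
  have X: "\<bar>?X \<pi>\<bar> \<le> a" if "\<pi> \<in> ?W" for \<pi>
    using F length_finite_permutations_of_multiset[OF that] pq by simp
  then have "\<bar>set_mean ?W ?X\<bar> \<le> a" by (intro abs_set_mean_le) auto
  with X have "\<bar>(?X \<pi> - set_mean ?W ?X)
      * (set_mean (distinct_tuples q {p..<size M}) (\<lambda>is. G (map ((!) \<pi>) is)) - ?c)\<bar>
      \<le> 2 * a * (2 * b * ?r)" if "\<pi> \<in> ?W" for \<pi>
    unfolding abs_mult
    using abs_set_mean_distinct_tuples_diff_le[OF that \<open>\<pi>\<^sub>0 \<in> ?W\<close> pq G] X[OF that]
    by (intro mult_mono) fastforce+
  then have "\<bar>pmf_cov (pmf_of_set ?W) ?X (\<lambda>\<pi>. G (take q (drop p \<pi>)))\<bar> \<le> 2 * a * (2 * b * ?r)"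
    unfolding pmf_cov_consecutive_blocks_eq[OF pq, where c = ?c] by (intro abs_set_mean_le) auto
  then show ?thesis by (simp add: mult.assoc)
qed

theorem lemma2p10:
  shows "\<exists>C::real. \<forall>(p::nat) (q::nat) (f::nat list \<Rightarrow> real) (g::nat list \<Rightarrow> real)
            (h::nat) (ns::nat \<Rightarrow> nat).
     p \<le> 5 \<and> q \<le> 5 \<and>
     depends_only_on_rel_order p f \<and> depends_only_on_rel_order q g \<and>
     (\<forall>xs. length xs = p \<longrightarrow> \<bar>f xs\<bar> \<le> 5) \<and>
     (\<forall>ys. length ys = q \<longrightarrow> \<bar>g ys\<bar> \<le> 5) \<and>
     (\<forall>a\<in>{1..h}. ns a > 0) \<and>
     (\<Sum>a\<in>{1..h}. ns a) \<ge> p + q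
     \<longrightarrow>
     \<bar>pmf_cov (pmf_of_set (permutations_of_multiset (multiset_of_counts h ns)))
        (\<lambda>\<pi>. f (take p \<pi>)) (\<lambda>\<pi>. g (take q (drop p \<pi>)))\<bar>
       \<le> C / real (\<Sum>a\<in>{1..h}. ns a)"
proof (intro exI[of _ 5000] allI impI, elim conjE)
  fix p q :: nat and f g :: "nat list \<Rightarrow> real" and h :: nat and ns :: "nat \<Rightarrow> nat"
  assume "p \<le> 5" "q \<le> 5"
    and "\<forall>xs. length xs = p \<longrightarrow> \<bar>f xs\<bar> \<le> 5" "\<forall>ys. length ys = q \<longrightarrow> \<bar>g ys\<bar> \<le> 5"
    and "p + q \<le> (\<Sum>a\<in>{1..h}. ns a)"
  moreover have size: "size (multiset_of_counts h ns) = (\<Sum>a\<in>{1..h}. ns a)"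
    by (simp add: multiset_of_counts_def)
  ultimately have "\<bar>pmf_cov (pmf_of_set (permutations_of_multiset (multiset_of_counts h ns)))
        (\<lambda>\<pi>. f (take p \<pi>)) (\<lambda>\<pi>. g (take q (drop p \<pi>)))\<bar>
      \<le> 100 * (q * (p + q) / (\<Sum>a\<in>{1..h}. ns a))"
    using abs_pmf_cov_consecutive_blocks_le[where M = "multiset_of_counts h ns" and F = f and a = 5
        and G = g and b = 5]
    by (simp add: size)
  also have "\<dots> \<le> 100 * (50 / (\<Sum>a\<in>{1..h}. ns a))"
  proof -
    have "q * (p + q) \<le> 50"
      using mult_mono[of q 5 "p + q" 10] \<open>p \<le> 5\<close> \<open>q \<le> 5\<close> by simp
    then have "real (q * (p + q)) \<le> 50" by (metis of_nat_le_iff of_nat_numeral)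
    then show ?thesis by (intro mult_left_mono divide_right_mono) (auto simp: sum_nonneg)
  qed
  finally show "\<bar>pmf_cov (pmf_of_set (permutations_of_multiset (multiset_of_counts h ns)))
        (\<lambda>\<pi>. f (take p \<pi>)) (\<lambda>\<pi>. g (take q (drop p \<pi>)))\<bar> \<le> 5000 / real (\<Sum>a\<in>{1..h}. ns a)"
    by simp
qed

end
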